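(* Let $n\ge 1$, let $H$ and $L$ be Hermitian $n\times n$ matrices with $[H,L]=0$, and let $0<\eta\le 1$. Write $L=\sum_{k=1}^{K}\lambda_k P_k$ and $H=\sum_{j=1}^{D}\beta_j Q_j$, where $\lambda_k,\beta_j\in\mathbb{R}$, the $P_k$ are Hermitian orthogonal projections with $P_kP_l=\delta_{kl}P_l$, the $Q_j$ are Hermitian orthogonal projections with $Q_jQ_l=\delta_{jl}Q_l$, and $[P_k,Q_j]=0$ for all $k,j$. Let $\rho_0$ be an $n\times n$ density matrix. For $\theta\in\mathbb{R}^K$, $\gamma\in\mathbb{R}^D$ and $\alpha=(\alpha_{kj})_{1\le k\le j\le K}\in\mathbb{R}^{K(K+1)/2}$, set $\phi=(\theta,\gamma,\alpha)$, $L_\theta=\sum_{k=1}^K\theta_kP_k$, $H_\gamma=\sum_{j=1}^D\gamma_jQ_j$, $$\rho_\alpha=\rho_0+\sum_{1\le k\le j\le K}\big(P_k\rho_0P_j+(1-\delta_{kj})P_j\rho_0P_k\big)\big(e^{\alpha_{kj}}-1\big),$$ and $\tilde\rho_\phi=e^{\frac12L_\theta+\frac i2H_\gamma}\rho_\alpha e^{\frac12L_\theta-\frac i2H_\gamma}$. Define $F(\rho)=(1-\eta)L\rho L^\dagger-\frac12\big((\eta L+L^\dagger)L\rho+\rho L^\dagger(L+\eta L^\dagger)\big)$. Then, for every $\phi$, the matrices $i[H,\tilde\rho_\phi]$, $F(\tilde\rho_\phi)$ and $L\tilde\rho_\phi+\tilde\rho_\phi L$ belong to $\mathrm{span}\{\partial\tilde\rho_\phi/\partial\phi_1,\dots,\partial\tilde\rho_\phi/\partial\phi_N\}$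 (where $N=K+D+K(K+1)/2$ and $\phi_1,\dots,\phi_N$ are the coordinates $\theta_k,\gamma_j,\alpha_{kj}$), and more precisely $$i[H,\tilde\rho_\phi]=2\sum_{j=1}^D\beta_j\frac{\partial\tilde\rho_\phi}{\partial\gamma_j},\qquad L\tilde\rho_\phi+\tilde\rho_\phi L=2\sum_{k=1}^K\lambda_k\frac{\partial\tilde\rho_\phi}{\partial\theta_k},$$ $$F(\tilde\rho_\phi)=(1-\eta)\sum_{1\le k\le j\le K}\lambda_k\lambda_j\frac{\partial\tilde\rho_\phi}{\partial\alpha_{kj}}-(1+\eta)\sum_{k=1}^K\lambda_k^2\frac{\partial\tilde\rho_\phi}{\partial\theta_k}.$$
   Context: $[A,B]=AB-BA$, $A^\dagger$ is the conjugate transpose, $\delta_{kj}$ is the Kronecker delta. The sum over $(k,j)$ in the formula for $F$ ranges over the index set $1\le k\le j\le K$ on which the coordinates $\alpha_{kj}$ are defined. *)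

theory Defs
  imports "HOL-Analysis.Analysis"
begin

text \<open>Complex n x n matrices are represented as complex^'n^'n; the matrix
product is (**) (note: (*) on vec is componentwise, and is NOT used).\<close>

definition adj :: "complex^'n^'n \<Rightarrow> complex^'n^'n" where
  "adj A = (\<chi> i j. cnj (A $ j $ i))"

definition hermitian :: "complex^'n^'n \<Rightarrow> bool" where
  "hermitian A \<longleftrightarrow> adj A = A"

definition comm :: "complex^'n^'n \<Rightarrow> complex^'n^'n \<Rightarrow> complex^'n^'n" where
  "comm A B = A ** B - B ** A"

definition csmult :: "complex \<Rightarrow> complex^'n^'n \<Rightarrow> complex^'n^'n" where
  "csmult c A = (\<chi> i j. c * A $ i $ j)"

primrec mpow :: "complex^'n^'n \<Rightarrow> nat \<Rightarrow> complex^'n^'n" where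
  "mpow A 0 = mat 1"
| "mpow A (Suc m) = A ** mpow A m"

definition mexp :: "complex^'n^'n \<Rightarrow> complex^'n^'n" where
  "mexp A = (\<Sum>m. (1 / fact m) *\<^sub>R mpow A m)"

definition psd :: "complex^'n^'n \<Rightarrow> bool" where
  "psd A \<longleftrightarrow> (\<forall>v :: complex^'n. 0 \<le> Re (\<Sum>i\<in>UNIV. cnj (v $ i) * (A *v v) $ i))"

definition density_matrix :: "complex^'n^'n \<Rightarrow> bool" where
  "density_matrix A \<longleftrightarrow> hermitian A \<and> psd A \<and> trace A = 1"

definition orth_proj_family :: "nat \<Rightarrow> (nat \<Rightarrow> complex^'n^'n) \<Rightarrow> bool" where
  "orth_proj_family K P \<longleftrightarrow>
     (\<forall>k\<in>{1..K}. hermitian (P k)) \<and>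
     (\<forall>k\<in>{1..K}. \<forall>l\<in>{1..K}. P k ** P l = (if k = l then P l else 0))"

definition alpha_idx :: "nat \<Rightarrow> (nat \<times> nat) set" where
  "alpha_idx K = {(k, j). 1 \<le> k \<and> k \<le> j \<and> j \<le> K}"

definition rho_alpha :: "nat \<Rightarrow> (nat \<Rightarrow> complex^'n^'n) \<Rightarrow> complex^'n^'n
    \<Rightarrow> (nat \<Rightarrow> nat \<Rightarrow> real) \<Rightarrow> complex^'n^'n" where
  "rho_alpha K P \<rho>0 \<alpha> = \<rho>0 +
     (\<Sum>(k, j)\<in>alpha_idx K.
        (exp (\<alpha> k j) - 1) *\<^sub>R
          (P k ** \<rho>0 ** P j + (if k = j then 0 else 1) *\<^sub>R (P j ** \<rho>0 ** P k)))"

definition L_theta :: "nat \<Rightarrow> (nat \<Rightarrow> complex^'n^'n) \<Rightarrow> (nat \<Rightarrow> real) \<Rightarrow> complex^'n^'n" where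
  "L_theta K P \<theta> = (\<Sum>k=1..K. \<theta> k *\<^sub>R P k)"

definition H_gamma :: "nat \<Rightarrow> (nat \<Rightarrow> complex^'n^'n) \<Rightarrow> (nat \<Rightarrow> real) \<Rightarrow> complex^'n^'n" where
  "H_gamma D Q \<gamma> = (\<Sum>j=1..D. \<gamma> j *\<^sub>R Q j)"

definition rho_tilde :: "nat \<Rightarrow> nat \<Rightarrow> (nat \<Rightarrow> complex^'n^'n) \<Rightarrow> (nat \<Rightarrow> complex^'n^'n)
    \<Rightarrow> complex^'n^'n \<Rightarrow> (nat \<Rightarrow> real) \<Rightarrow> (nat \<Rightarrow> real) \<Rightarrow> (nat \<Rightarrow> nat \<Rightarrow> real)
    \<Rightarrow> complex^'n^'n" where
  "rho_tilde K D P Q \<rho>0 \<theta> \<gamma> \<alpha> =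
     mexp ((1/2) *\<^sub>R L_theta K P \<theta> + csmult (\<i>/2) (H_gamma D Q \<gamma>)) **
     rho_alpha K P \<rho>0 \<alpha> **
     mexp ((1/2) *\<^sub>R L_theta K P \<theta> - csmult (\<i>/2) (H_gamma D Q \<gamma>))"

definition Fmap :: "real \<Rightarrow> complex^'n^'n \<Rightarrow> complex^'n^'n \<Rightarrow> complex^'n^'n" where
  "Fmap \<eta> L \<rho> = (1 - \<eta>) *\<^sub>R (L ** \<rho> ** adj L)
     - (1/2) *\<^sub>R ((\<eta> *\<^sub>R L + adj L) ** L ** \<rho> + \<rho> ** adj L ** (L + \<eta> *\<^sub>R adj L))"

end

theory Submission
  imports Defs
begin

(* Complete the families by P 0 = 1 - (sum of the P k) and Q 0 = 1 - (sum of the Q j).  Since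
   the P k commute with the Q j, the products R (k, j) = P k Q j are orthogonal idempotents
   summing to 1, and L, H, L_theta and H_gamma are all diagonal with respect to them.  Hence
   conjugation by the two exponentials multiplies each block R p rho0 R q by a scalar, and so
   does rho_alpha: rho_tilde is the block-wise (Schur) product of rho0 with exp (Z p q), where
   Z is affine in every coordinate theta k, gamma j, alpha k j.  Every partial derivative and
   each of i[H, rho], L rho + rho L and F(rho) is again a Schur product of rho0, so all the
   identities reduce to identities between scalar symbols, block by block. *)

section \<open>Matrix algebra\<close>

lemma matrix_add_rdistrib: "((A::'a::semiring_1^'n^'m) + B) ** C = A ** C + B ** C"
  by (simp add: matrix_matrix_mult_def vec_eq_iff sum.distrib distrib_right)

lemma matrix_diff_ldistrib: "(A::'a::ring_1^'n^'m) ** (B - C) = A ** B - A ** C"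
  by (simp add: matrix_matrix_mult_def vec_eq_iff sum_subtractf right_diff_distrib)

lemma matrix_diff_rdistrib: "((A::'a::ring_1^'n^'m) - B) ** C = A ** C - B ** C"
  by (simp add: matrix_matrix_mult_def vec_eq_iff sum_subtractf left_diff_distrib)

lemma sum_matrix_mul: "(\<Sum>x\<in>S. f x) ** (B::'a::semiring_1^'p^'n) = (\<Sum>x\<in>S. f x ** B)"
  by (induction S rule: infinite_finite_induct) (auto simp: matrix_add_rdistrib)

lemma matrix_mul_sum: "(A::'a::semiring_1^'n^'m) ** (\<Sum>x\<in>S. f x) = (\<Sum>x\<in>S. A ** f x)"
  by (induction S rule: infinite_finite_induct) (auto simp: matrix_add_ldistrib)

lemma csmult_add_left: "csmult (a + b) A = csmult a A + csmult b A"
  by (simp add: csmult_def vec_eq_iff distrib_right)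

lemma csmult_diff_left: "csmult (a - b) A = csmult a A - csmult b A"
  by (simp add: csmult_def vec_eq_iff left_diff_distrib)

lemma csmult_add_right: "csmult a (A + B) = csmult a A + csmult a B"
  by (simp add: csmult_def vec_eq_iff distrib_left)

lemma csmult_csmult: "csmult a (csmult b A) = csmult (a * b) A"
  by (simp add: csmult_def vec_eq_iff)

lemma csmult_one [simp]: "csmult 1 A = A"
  and csmult_zero_left [simp]: "csmult 0 A = 0"
  and csmult_zero_right [simp]: "csmult a 0 = 0"
  by (simp_all add: csmult_def vec_eq_iff)

lemma scaleR_conv_csmult: "r *\<^sub>R A = csmult (of_real r) A"
  by (simp add: csmult_def vec_eq_iff) (simp add: scaleR_conv_of_real)

lemma csmult_sum_left: "csmult (\<Sum>x\<in>S. f x) A = (\<Sum>x\<in>S. csmult (f x) A)"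
  by (induction S rule: infinite_finite_induct) (auto simp: csmult_add_left)

lemma csmult_sum_right: "csmult a (\<Sum>x\<in>S. f x) = (\<Sum>x\<in>S. csmult a (f x))"
  by (induction S rule: infinite_finite_induct) (auto simp: csmult_add_right)

lemma csmult_matrix_mul: "csmult a A ** B = csmult a (A ** B)"
  by (simp add: csmult_def matrix_matrix_mult_def vec_eq_iff sum_distrib_left mult.assoc)

lemma matrix_mul_csmult: "A ** csmult a B = csmult a (A ** B)"
  by (simp add: csmult_def matrix_matrix_mult_def vec_eq_iff sum_distrib_left mult_ac)

lemma bounded_linear_csmult_left: "bounded_linear (\<lambda>z. csmult z A)"
proof -
  have "linear (\<lambda>z. csmult z A)"
    by (rule linearI) (simp_all add: csmult_add_left scaleR_conv_csmult csmult_csmult scaleR_conv_of_real)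
  then show ?thesis
    by (rule linear_conv_bounded_linear[THEN iffD1])
qed

lemma has_vector_derivative_exp_affine:
  fixes a b :: complex
  assumes "\<And>t. z t = a + of_real t * b"
  shows "((\<lambda>t. exp (z t)) has_vector_derivative b * exp (z x)) (at x)"
  unfolding assms
  by (rule has_vector_derivative_real_field) (auto intro!: derivative_eq_intros)

section \<open>Resolutions of the identity\<close>

locale resolution_of_identity =
  fixes I :: "'i set" and R :: "'i \<Rightarrow> complex^'n^'n"
  assumes finite_index [simp]: "finite I"
    and orthogonal: "\<And>p q. p \<in> I \<Longrightarrow> q \<in> I \<Longrightarrow> R p ** R q = (if p = q then R p else 0)"
    and sum_eq_mat_1: "(\<Sum>p\<in>I. R p) = mat 1"
begin

definition diag :: "('i \<Rightarrow> complex) \<Rightarrow> complex^'n^'n" where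
  "diag c = (\<Sum>p\<in>I. csmult (c p) (R p))"

lemma diag_mult_R:
  assumes "p \<in> I"
  shows "diag c ** R p = csmult (c p) (R p)"
proof -
  have "diag c ** R p = (\<Sum>q\<in>I. if q = p then csmult (c p) (R p) else 0)"
    unfolding diag_def sum_matrix_mul csmult_matrix_mul
    by (intro sum.cong refl) (simp add: orthogonal assms)
  then show ?thesis using assms by simp
qed

lemma R_mult_diag:
  assumes "p \<in> I"
  shows "R p ** diag c = csmult (c p) (R p)"
proof -
  have "R p ** diag c = (\<Sum>q\<in>I. if q = p then csmult (c p) (R p) else 0)"
    unfolding diag_def matrix_mul_sum matrix_mul_csmult
    by (intro sum.cong refl) (auto simp: orthogonal assms)
  then show ?thesis using assms by simp
qed

lemma eq_diagI:
  assumes "\<And>p. p \<in> I \<Longrightarrow> X ** R p = csmult (c p) (R p)"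
  shows "X = diag c"
proof -
  have "X = X ** (\<Sum>p\<in>I. R p)" by (simp add: sum_eq_mat_1)
  also have "\<dots> = diag c" by (simp add: matrix_mul_sum assms diag_def)
  finally show ?thesis .
qed

lemma diag_one: "diag (\<lambda>_. 1) = mat 1"
  by (simp add: diag_def sum_eq_mat_1)

lemma diag_add: "diag a + diag b = diag (\<lambda>p. a p + b p)"
  by (simp add: diag_def csmult_add_left sum.distrib)

lemma diag_diff: "diag a - diag b = diag (\<lambda>p. a p - b p)"
  by (simp add: diag_def csmult_diff_left sum_subtractf)

lemma csmult_diag: "csmult z (diag a) = diag (\<lambda>p. z * a p)"
  by (simp add: diag_def csmult_sum_right csmult_csmult)

lemma scaleR_diag: "r *\<^sub>R diag a = diag (\<lambda>p. of_real r * a p)"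
  by (simp add: scaleR_conv_csmult csmult_diag)

lemma sum_diag: "(\<Sum>x\<in>S. diag (a x)) = diag (\<lambda>p. \<Sum>x\<in>S. a x p)"
  by (simp add: diag_def csmult_sum_left sum.swap[of _ S])

lemma diag_mult_diag: "diag a ** diag b = diag (\<lambda>p. a p * b p)"
  by (rule eq_diagI) (simp add: matrix_mul_assoc[symmetric] diag_mult_R matrix_mul_csmult
      csmult_matrix_mul csmult_csmult mult.commute)

lemma mpow_diag: "mpow (diag c) m = diag (\<lambda>p. c p ^ m)"
  by (induction m) (simp_all add: diag_one diag_mult_diag)

lemma mexp_diag: "mexp (diag c) = diag (\<lambda>p. exp (c p))"
proof -
  have "(\<lambda>m. (1 / fact m) *\<^sub>R mpow (diag c) m) = (\<lambda>m. \<Sum>p\<in>I. csmult (c p ^ m /\<^sub>R fact m) (R p))"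
    by (simp add: mpow_diag scaleR_diag) (simp add: diag_def scaleR_conv_of_real field_simps)
  moreover have "(\<lambda>m. \<Sum>p\<in>I. csmult (c p ^ m /\<^sub>R fact m) (R p)) sums diag (\<lambda>p. exp (c p))"
    unfolding diag_def
    by (intro sums_sum bounded_linear.sums[OF bounded_linear_csmult_left] exp_converges)
  ultimately show ?thesis
    unfolding mexp_def by (simp add: sums_iff)
qed

definition schur_mult :: "('i \<Rightarrow> 'i \<Rightarrow> complex) \<Rightarrow> complex^'n^'n \<Rightarrow> complex^'n^'n" where
  "schur_mult s \<rho> = (\<Sum>p\<in>I. \<Sum>q\<in>I. csmult (s p q) (R p ** \<rho> ** R q))"

lemma schur_mult_cong:
  "(\<And>p q. p \<in> I \<Longrightarrow> q \<in> I \<Longrightarrow> s p q = s' p q) \<Longrightarrow> schur_mult s \<rho> = schur_mult s' \<rho>"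
  unfolding schur_mult_def by (intro sum.cong refl) auto

lemma schur_mult_one: "schur_mult (\<lambda>_ _. 1) \<rho> = \<rho>"
  by (simp add: schur_mult_def sum_matrix_mul[symmetric] matrix_mul_sum[symmetric] sum_eq_mat_1)

lemma schur_mult_add: "schur_mult s \<rho> + schur_mult t \<rho> = schur_mult (\<lambda>p q. s p q + t p q) \<rho>"
  by (simp add: schur_mult_def sum.distrib csmult_add_left)

lemma schur_mult_diff: "schur_mult s \<rho> - schur_mult t \<rho> = schur_mult (\<lambda>p q. s p q - t p q) \<rho>"
  by (simp add: schur_mult_def sum_subtractf csmult_diff_left)

lemma csmult_schur_mult: "csmult z (schur_mult s \<rho>) = schur_mult (\<lambda>p q. z * s p q) \<rho>"
  by (simp add: schur_mult_def csmult_sum_right csmult_csmult)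

lemma scaleR_schur_mult: "r *\<^sub>R schur_mult s \<rho> = schur_mult (\<lambda>p q. of_real r * s p q) \<rho>"
  by (simp add: scaleR_conv_csmult csmult_schur_mult)

lemma sum_schur_mult: "(\<Sum>x\<in>S. schur_mult (s x) \<rho>) = schur_mult (\<lambda>p q. \<Sum>x\<in>S. s x p q) \<rho>"
  by (simp add: schur_mult_def csmult_sum_left sum.swap[of _ S])

lemma sum_scaleR_schur_mult:
  "(\<Sum>x\<in>S. r x *\<^sub>R schur_mult (\<lambda>p q. c x p q * s p q) \<rho>)
     = schur_mult (\<lambda>p q. (\<Sum>x\<in>S. of_real (r x) * c x p q) * s p q) \<rho>"
  by (simp add: scaleR_schur_mult sum_schur_mult sum_distrib_right mult.assoc)

lemma diag_mult_schur_mult: "diag c ** schur_mult s \<rho> = schur_mult (\<lambda>p q. c p * s p q) \<rho>"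
  by (simp add: schur_mult_def matrix_mul_sum matrix_mul_csmult matrix_mul_assoc diag_mult_R
      csmult_matrix_mul csmult_csmult mult.commute)

lemma schur_mult_mult_diag: "schur_mult s \<rho> ** diag c = schur_mult (\<lambda>p q. s p q * c q) \<rho>"
  by (simp add: schur_mult_def sum_matrix_mul csmult_matrix_mul matrix_mul_assoc[symmetric]
      R_mult_diag matrix_mul_csmult csmult_csmult)

lemma has_vector_derivative_schur_mult:
  assumes "\<And>p q. p \<in> I \<Longrightarrow> q \<in> I \<Longrightarrow> ((\<lambda>t. s t p q) has_vector_derivative s' p q) (at t0)"
  shows "((\<lambda>t. schur_mult (s t) \<rho>) has_vector_derivative schur_mult s' \<rho>) (at t0)"
  unfolding schur_mult_def
  by (intro has_vector_derivative_sum bounded_linear.has_vector_derivative[OF bounded_linear_csmult_left] assms)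

end

definition complete_family :: "nat \<Rightarrow> (nat \<Rightarrow> complex^'n^'n) \<Rightarrow> nat \<Rightarrow> complex^'n^'n" where
  "complete_family K P k = (if k = 0 then mat 1 - (\<Sum>l=1..K. P l) else P k)"

lemma resolution_of_identity_complete_family:
  assumes "orth_proj_family K P"
  shows "resolution_of_identity {0..K} (complete_family K P)"
proof
  define S where "S = (\<Sum>l=1..K. P l)"
  have orth: "P k ** P l = (if k = l then P l else 0)" if "k \<in> {1..K}" "l \<in> {1..K}" for k l
    using assms that unfolding orth_proj_family_def by blast
  have PS: "P k ** S = P k" if "k \<in> {1..K}" for k
  proof -
    have "P k ** S = (\<Sum>l=1..K. if k = l then P l else 0)"
      unfolding S_def matrix_mul_sum using that by (intro sum.cong) (auto simp: orth)
    then show ?thesis using that by simp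
  qed
  have SP: "S ** P k = P k" if "k \<in> {1..K}" for k
  proof -
    have "S ** P k = (\<Sum>l=1..K. if l = k then P k else 0)"
      unfolding S_def sum_matrix_mul using that by (intro sum.cong) (auto simp: orth)
    then show ?thesis using that by simp
  qed
  have "S ** S = (\<Sum>l=1..K. P l ** S)"
    unfolding sum_matrix_mul[symmetric] S_def ..
  also have "\<dots> = (\<Sum>l=1..K. P l)"
    by (intro sum.cong refl) (simp add: PS)
  also have "\<dots> = S"
    by (simp add: S_def)
  finally have SS: "S ** S = S" .
  show "complete_family K P k ** complete_family K P l = (if k = l then complete_family K P k else 0)"
    if "k \<in> {0..K}" "l \<in> {0..K}" for k l
    using that unfolding complete_family_def S_def[symmetric]
    by (cases "k = 0"; cases "l = 0")
      (auto simp: matrix_diff_ldistrib matrix_diff_rdistrib SS PS SP orth)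
  have "(\<Sum>k=0..K. complete_family K P k) = complete_family K P 0 + (\<Sum>k=1..K. complete_family K P k)"
    by (simp add: sum.atLeast_Suc_atMost)
  then show "(\<Sum>k=0..K. complete_family K P k) = mat 1"
    by (simp add: complete_family_def)
qed simp

lemma complete_family_commute:
  assumes "\<And>k. k \<in> {1..K} \<Longrightarrow> X ** P k = P k ** X" and "k \<in> {0..K}"
  shows "X ** complete_family K P k = complete_family K P k ** X"
  using assms
  by (auto simp: complete_family_def matrix_diff_ldistrib matrix_diff_rdistrib matrix_mul_sum
      sum_matrix_mul intro!: sum.cong)

definition product_family :: "('i \<Rightarrow> complex^'n^'n) \<Rightarrow> ('j \<Rightarrow> complex^'n^'n) \<Rightarrow> 'i \<times> 'j \<Rightarrow> complex^'n^'n" where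
  "product_family A B p = A (fst p) ** B (snd p)"

locale commuting_resolutions =
  A: resolution_of_identity I A + B: resolution_of_identity J B
  for I :: "'i set" and A :: "'i \<Rightarrow> complex^'n^'n" and J :: "'j set" and B :: "'j \<Rightarrow> complex^'n^'n" +
  assumes commute: "\<And>i j. i \<in> I \<Longrightarrow> j \<in> J \<Longrightarrow> A i ** B j = B j ** A i"
begin

sublocale resolution_of_identity "I \<times> J" "product_family A B"
proof
  show "product_family A B p ** product_family A B q = (if p = q then product_family A B p else 0)"
    if "p \<in> I \<times> J" "q \<in> I \<times> J" for p q
  proof -
    have "B (snd p) ** A (fst q) = A (fst q) ** B (snd p)"
      using that by (simp add: commute mem_Times_iff)
    then have "product_family A B p ** product_family A B q = (A (fst p) ** A (fst q)) ** (B (snd p) ** B (snd q))"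
      by (metis product_family_def matrix_mul_assoc)
    then show ?thesis
      using that by (auto simp: A.orthogonal B.orthogonal mem_Times_iff prod_eq_iff product_family_def)
  qed
  have "(\<Sum>p\<in>I \<times> J. product_family A B p) = (\<Sum>i\<in>I. \<Sum>j\<in>J. A i ** B j)"
    by (simp add: product_family_def sum.cartesian_product split_def)
  also have "\<dots> = (\<Sum>i\<in>I. A i) ** (\<Sum>j\<in>J. B j)"
    by (simp add: sum_matrix_mul matrix_mul_sum) (rule sum.swap)
  finally show "(\<Sum>p\<in>I \<times> J. product_family A B p) = mat 1"
    by (simp add: A.sum_eq_mat_1 B.sum_eq_mat_1)
qed simp

lemma fst_factor_eq_diag: "i \<in> I \<Longrightarrow> A i = diag (\<lambda>p. if fst p = i then 1 else 0)"
  by (rule eq_diagI) (auto simp: product_family_def matrix_mul_assoc A.orthogonal mem_Times_iff)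

lemma snd_factor_eq_diag: "j \<in> J \<Longrightarrow> B j = diag (\<lambda>p. if snd p = j then 1 else 0)"
proof (rule eq_diagI)
  fix p assume "j \<in> J" "p \<in> I \<times> J"
  then have "B j ** A (fst p) = A (fst p) ** B j"
    by (simp add: commute mem_Times_iff)
  then have "B j ** product_family A B p = A (fst p) ** (B j ** B (snd p))"
    by (simp add: product_family_def matrix_mul_assoc)
  with \<open>j \<in> J\<close> \<open>p \<in> I \<times> J\<close> show "B j ** product_family A B p
      = csmult (if snd p = j then 1 else 0) (product_family A B p)"
    by (auto simp: B.orthogonal mem_Times_iff product_family_def)
qed

end

section \<open>Scalar symbols\<close>

definition zero_ext :: "nat \<Rightarrow> (nat \<Rightarrow> 'a::zero) \<Rightarrow> nat \<Rightarrow> 'a" where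
  "zero_ext K f k = (if k \<in> {1..K} then f k else 0)"

definition sym_ext :: "nat \<Rightarrow> (nat \<Rightarrow> nat \<Rightarrow> 'a::zero) \<Rightarrow> nat \<Rightarrow> nat \<Rightarrow> 'a" where
  "sym_ext K f a b = (if a \<in> {1..K} \<and> b \<in> {1..K} then f (min a b) (max a b) else 0)"

lemma finite_alpha_idx: "finite (alpha_idx K)"
  by (rule finite_subset[of _ "{1..K} \<times> {1..K}"]) (auto simp: alpha_idx_def)

lemma min_max_mem_alpha_idx: "(min a b, max a b) \<in> alpha_idx K \<longleftrightarrow> a \<in> {1..K} \<and> b \<in> {1..K}"
  by (auto simp: alpha_idx_def min_def max_def)

lemma sum_alpha_idx_min_max:
  "(\<Sum>(k, j)\<in>alpha_idx K. if min a b = k \<and> max a b = j then f k j else 0) = sym_ext K f a b"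
proof -
  have "(\<Sum>(k, j)\<in>alpha_idx K. if min a b = k \<and> max a b = j then f k j else 0)
      = (\<Sum>x\<in>alpha_idx K. if x = (min a b, max a b) then f (min a b) (max a b) else 0)"
    by (intro sum.cong refl) (auto split: prod.splits)
  then show ?thesis
    by (simp add: finite_alpha_idx min_max_mem_alpha_idx sym_ext_def)
qed

lemma sum_alpha_idx_symmetrized:
  fixes f :: "nat \<Rightarrow> nat \<Rightarrow> 'a::comm_ring_1"
  shows "(\<Sum>(k, j)\<in>alpha_idx K. f k j * ((if a = k \<and> b = j then 1 else 0)
            + (if k = j then 0 else 1) * (if a = j \<and> b = k then 1 else 0)))
         = sym_ext K f a b"
proof -
  have "f k j * ((if a = k \<and> b = j then 1 else 0) + (if k = j then 0 else 1) * (if a = j \<and> b = k then 1 else 0))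
      = (if min a b = k \<and> max a b = j then f k j else 0)" if "(k, j) \<in> alpha_idx K" for k j
  proof -
    have "k \<le> j" using that by (simp add: alpha_idx_def)
    then show ?thesis by (cases "k = j"; cases "a \<le> b") (auto simp: min_def max_def)
  qed
  then show ?thesis
    unfolding sum_alpha_idx_min_max[symmetric] by (intro sum.cong refl) auto
qed

(* The partial derivatives of tilde_exponent (defined below) in theta k, gamma j and alpha k j. *)
definition d_theta :: "nat \<Rightarrow> nat \<times> nat \<Rightarrow> nat \<times> nat \<Rightarrow> complex" where
  "d_theta k p q = ((if fst p = k then 1 else 0) + (if fst q = k then 1 else 0)) / 2"

definition d_gamma :: "nat \<Rightarrow> nat \<times> nat \<Rightarrow> nat \<times> nat \<Rightarrow> complex" where
  "d_gamma j p q = \<i> * ((if snd p = j then 1 else 0) - (if snd q = j then 1 else 0)) / 2"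

definition d_alpha :: "nat \<Rightarrow> nat \<Rightarrow> nat \<times> nat \<Rightarrow> nat \<times> nat \<Rightarrow> complex" where
  "d_alpha k j p q = (if min (fst p) (fst q) = k \<and> max (fst p) (fst q) = j then 1 else 0)"

lemma sum_mult_indicator:
  "(\<Sum>k=1..K. f k * (if a = k then 1 else 0)) = (zero_ext K f a :: 'a::semiring_1)"
  by (simp add: zero_ext_def if_distrib[of "(*) _"] sum.delta cong: if_cong)

lemma sum_d_theta:
  "(\<Sum>k=1..K. of_real (f k) * d_theta k p q) = of_real (zero_ext K f (fst p) + zero_ext K f (fst q)) / 2"
proof -
  have "(\<Sum>k=1..K. of_real (f k) * d_theta k p q)
      = ((\<Sum>k=1..K. of_real (f k) * (if fst p = k then 1 else 0))
         + (\<Sum>k=1..K. of_real (f k) * (if fst q = k then 1 else 0))) / 2"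
    by (simp add: d_theta_def distrib_left sum.distrib sum_divide_distrib[symmetric])
  then show ?thesis
    unfolding sum_mult_indicator by (simp add: zero_ext_def)
qed

lemma sum_d_gamma:
  "(\<Sum>j=1..D. of_real (f j) * d_gamma j p q) = \<i> * of_real (zero_ext D f (snd p) - zero_ext D f (snd q)) / 2"
proof -
  have "(\<Sum>j=1..D. of_real (f j) * d_gamma j p q)
      = \<i> * ((\<Sum>j=1..D. of_real (f j) * (if snd p = j then 1 else 0))
         - (\<Sum>j=1..D. of_real (f j) * (if snd q = j then 1 else 0))) / 2"
    by (simp add: d_gamma_def right_diff_distrib sum_subtractf sum_divide_distrib[symmetric]
        sum_distrib_left mult_ac)
  then show ?thesis
    unfolding sum_mult_indicator by (simp add: zero_ext_def)
qed

lemma sum_d_alpha: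
  "(\<Sum>(k, j)\<in>alpha_idx K. of_real (f k * f j) * d_alpha k j p q)
     = of_real (zero_ext K f (fst p) * zero_ext K f (fst q))"
proof -
  have "(\<Sum>(k, j)\<in>alpha_idx K. of_real (f k * f j) * d_alpha k j p q)
      = sym_ext K (\<lambda>k j. of_real (f k * f j)) (fst p) (fst q)"
    unfolding sum_alpha_idx_min_max[symmetric] d_alpha_def by (intro sum.cong refl) auto
  then show ?thesis
    by (cases "fst p \<le> fst q") (simp_all add: sym_ext_def zero_ext_def min_def max_def mult.commute)
qed

section \<open>Commuting families of projections\<close>

locale commuting_projection_families =
  fixes K D :: nat and P Q :: "nat \<Rightarrow> complex^'n^'n"
  assumes P_family: "orth_proj_family K P" and Q_family: "orth_proj_family D Q"
    and P_Q_commute: "\<And>k j. k \<in> {1..K} \<Longrightarrow> j \<in> {1..D} \<Longrightarrow> P k ** Q j = Q j ** P k"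
begin

sublocale commuting_resolutions "{0..K}" "complete_family K P" "{0..D}" "complete_family D Q"
proof (intro commuting_resolutions.intro commuting_resolutions_axioms.intro
    resolution_of_identity_complete_family P_family Q_family)
  fix k j assume "k \<in> {0..K}" "j \<in> {0..D}"
  moreover have "Q j' ** complete_family K P k = complete_family K P k ** Q j'" if "j' \<in> {1..D}" for j'
    using complete_family_commute[OF _ \<open>k \<in> {0..K}\<close>] P_Q_commute that by metis
  ultimately show "complete_family K P k ** complete_family D Q j = complete_family D Q j ** complete_family K P k"
    using complete_family_commute by metis
qed

lemma P_eq_diag: "k \<in> {1..K} \<Longrightarrow> P k = diag (\<lambda>p. if fst p = k then 1 else 0)"
  using fst_factor_eq_diag[of k] by (simp add: complete_family_def)

lemma Q_eq_diag: "j \<in> {1..D} \<Longrightarrow> Q j = diag (\<lambda>p. if snd p = j then 1 else 0)"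
  using snd_factor_eq_diag[of j] by (simp add: complete_family_def)

lemma sum_scaleR_P_eq_diag: "(\<Sum>k=1..K. f k *\<^sub>R P k) = diag (\<lambda>p. of_real (zero_ext K f (fst p)))"
proof -
  have "(\<Sum>k=1..K. f k *\<^sub>R P k) = (\<Sum>k=1..K. diag (\<lambda>p. of_real (f k) * (if fst p = k then 1 else 0)))"
    by (intro sum.cong refl) (simp add: P_eq_diag scaleR_diag)
  then show ?thesis
    unfolding sum_diag sum_mult_indicator by (auto simp: zero_ext_def intro!: arg_cong[where f = diag])
qed

lemma sum_scaleR_Q_eq_diag: "(\<Sum>j=1..D. f j *\<^sub>R Q j) = diag (\<lambda>p. of_real (zero_ext D f (snd p)))"
proof -
  have "(\<Sum>j=1..D. f j *\<^sub>R Q j) = (\<Sum>j=1..D. diag (\<lambda>p. of_real (f j) * (if snd p = j then 1 else 0)))"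
    by (intro sum.cong refl) (simp add: Q_eq_diag scaleR_diag)
  then show ?thesis
    unfolding sum_diag sum_mult_indicator by (auto simp: zero_ext_def intro!: arg_cong[where f = diag])
qed

lemma P_mult_P_eq_schur_mult:
  assumes "k \<in> {1..K}" "j \<in> {1..K}"
  shows "P k ** \<rho> ** P j = schur_mult (\<lambda>p q. if fst p = k \<and> fst q = j then 1 else 0) \<rho>"
proof -
  have "P k ** \<rho> ** P j
      = diag (\<lambda>p. if fst p = k then 1 else 0) ** schur_mult (\<lambda>_ _. 1) \<rho> ** diag (\<lambda>p. if fst p = j then 1 else 0)"
    using assms by (simp add: P_eq_diag schur_mult_one)
  then show ?thesis
    by (auto simp: diag_mult_schur_mult schur_mult_mult_diag intro!: schur_mult_cong)
qed

lemma rho_alpha_eq_schur_mult: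
  "rho_alpha K P \<rho> \<alpha> = schur_mult (\<lambda>p q. exp (of_real (sym_ext K \<alpha> (fst p) (fst q)))) \<rho>"
proof -
  have summand: "(exp (\<alpha> k j) - 1) *\<^sub>R (P k ** \<rho> ** P j + (if k = j then 0 else 1) *\<^sub>R (P j ** \<rho> ** P k))
      = schur_mult (\<lambda>p q. (of_real (exp (\<alpha> k j)) - 1) * ((if fst p = k \<and> fst q = j then 1 else 0)
          + (if k = j then 0 else 1) * (if fst p = j \<and> fst q = k then 1 else 0))) \<rho>"
    if "(k, j) \<in> alpha_idx K" for k j
    using that
    by (cases "k = j") (auto simp: alpha_idx_def P_mult_P_eq_schur_mult scaleR_schur_mult schur_mult_add
        intro!: schur_mult_cong)
  have "rho_alpha K P \<rho> \<alpha> = schur_mult (\<lambda>_ _. 1) \<rho> + (\<Sum>x\<in>alpha_idx K. schur_mult (\<lambda>p q.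
      (case x of (k, j) \<Rightarrow> (of_real (exp (\<alpha> k j)) - 1) * ((if fst p = k \<and> fst q = j then 1 else 0)
          + (if k = j then 0 else 1) * (if fst p = j \<and> fst q = k then 1 else 0)))) \<rho>)"
    unfolding rho_alpha_def schur_mult_one
    by (intro arg_cong2[where f = "(+)"] refl sum.cong) (auto simp: summand)
  also have "\<dots> = schur_mult (\<lambda>p q. 1 + sym_ext K (\<lambda>k j. of_real (exp (\<alpha> k j)) - 1) (fst p) (fst q)) \<rho>"
    by (simp only: sum_schur_mult schur_mult_add sum_alpha_idx_symmetrized)
  also have "\<dots> = schur_mult (\<lambda>p q. exp (of_real (sym_ext K \<alpha> (fst p) (fst q)))) \<rho>"
    by (rule schur_mult_cong) (simp add: sym_ext_def exp_of_real)
  finally show ?thesis .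
qed

definition tilde_exponent ::
    "(nat \<Rightarrow> real) \<Rightarrow> (nat \<Rightarrow> real) \<Rightarrow> (nat \<Rightarrow> nat \<Rightarrow> real) \<Rightarrow> nat \<times> nat \<Rightarrow> nat \<times> nat \<Rightarrow> complex" where
  "tilde_exponent \<theta> \<gamma> \<alpha> p q =
     (of_real (zero_ext K \<theta> (fst p) + zero_ext K \<theta> (fst q))
      + \<i> * of_real (zero_ext D \<gamma> (snd p) - zero_ext D \<gamma> (snd q))) / 2
     + of_real (sym_ext K \<alpha> (fst p) (fst q))"

lemma rho_tilde_eq_schur_mult:
  "rho_tilde K D P Q \<rho> \<theta> \<gamma> \<alpha> = schur_mult (\<lambda>p q. exp (tilde_exponent \<theta> \<gamma> \<alpha> p q)) \<rho>"
proof -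
  let ?l = "\<lambda>p. of_real (zero_ext K \<theta> (fst p)) :: complex"
  let ?h = "\<lambda>p. of_real (zero_ext D \<gamma> (snd p)) :: complex"
  have "(1/2) *\<^sub>R L_theta K P \<theta> + csmult (\<i>/2) (H_gamma D Q \<gamma>) = diag (\<lambda>p. (?l p + \<i> * ?h p) / 2)"
    unfolding L_theta_def H_gamma_def sum_scaleR_P_eq_diag sum_scaleR_Q_eq_diag
    by (simp add: scaleR_diag csmult_diag diag_add add_divide_distrib)
  moreover have "(1/2) *\<^sub>R L_theta K P \<theta> - csmult (\<i>/2) (H_gamma D Q \<gamma>) = diag (\<lambda>p. (?l p - \<i> * ?h p) / 2)"
    unfolding L_theta_def H_gamma_def sum_scaleR_P_eq_diag sum_scaleR_Q_eq_diag
    by (simp add: scaleR_diag csmult_diag diag_diff diff_divide_distrib)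
  ultimately have "rho_tilde K D P Q \<rho> \<theta> \<gamma> \<alpha> = schur_mult (\<lambda>p q. exp ((?l p + \<i> * ?h p) / 2)
      * exp (of_real (sym_ext K \<alpha> (fst p) (fst q))) * exp ((?l q - \<i> * ?h q) / 2)) \<rho>"
    by (simp add: rho_tilde_def mexp_diag rho_alpha_eq_schur_mult diag_mult_schur_mult schur_mult_mult_diag)
  also have "\<dots> = schur_mult (\<lambda>p q. exp (tilde_exponent \<theta> \<gamma> \<alpha> p q)) \<rho>"
    unfolding tilde_exponent_def mult_exp_exp
    by (intro schur_mult_cong arg_cong[where f = exp]) (simp add: field_simps)
  finally show ?thesis .
qed

lemma has_vector_derivative_rho_tilde_theta:
  assumes "k \<in> {1..K}"
  shows "((\<lambda>t. rho_tilde K D P Q \<rho> (\<theta>(k := t)) \<gamma> \<alpha>) has_vector_derivative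
           schur_mult (\<lambda>p q. d_theta k p q * exp (tilde_exponent \<theta> \<gamma> \<alpha> p q)) \<rho>) (at (\<theta> k))"
  unfolding rho_tilde_eq_schur_mult
proof (rule has_vector_derivative_schur_mult)
  fix p q
  have "tilde_exponent (\<theta>(k := t)) \<gamma> \<alpha> p q = tilde_exponent (\<theta>(k := 0)) \<gamma> \<alpha> p q + of_real t * d_theta k p q"
    for t using assms by (simp add: tilde_exponent_def zero_ext_def d_theta_def field_simps)
  from has_vector_derivative_exp_affine[OF this, where x = "\<theta> k"]
  show "((\<lambda>t. exp (tilde_exponent (\<theta>(k := t)) \<gamma> \<alpha> p q)) has_vector_derivative
          d_theta k p q * exp (tilde_exponent \<theta> \<gamma> \<alpha> p q)) (at (\<theta> k))"
    by simp
qed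

lemma has_vector_derivative_rho_tilde_gamma:
  assumes "j \<in> {1..D}"
  shows "((\<lambda>t. rho_tilde K D P Q \<rho> \<theta> (\<gamma>(j := t)) \<alpha>) has_vector_derivative
           schur_mult (\<lambda>p q. d_gamma j p q * exp (tilde_exponent \<theta> \<gamma> \<alpha> p q)) \<rho>) (at (\<gamma> j))"
  unfolding rho_tilde_eq_schur_mult
proof (rule has_vector_derivative_schur_mult)
  fix p q
  have "tilde_exponent \<theta> (\<gamma>(j := t)) \<alpha> p q = tilde_exponent \<theta> (\<gamma>(j := 0)) \<alpha> p q + of_real t * d_gamma j p q"
    for t using assms by (simp add: tilde_exponent_def zero_ext_def d_gamma_def field_simps)
  from has_vector_derivative_exp_affine[OF this, where x = "\<gamma> j"]
  show "((\<lambda>t. exp (tilde_exponent \<theta> (\<gamma>(j := t)) \<alpha> p q)) has_vector_derivative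
          d_gamma j p q * exp (tilde_exponent \<theta> \<gamma> \<alpha> p q)) (at (\<gamma> j))"
    by simp
qed

lemma has_vector_derivative_rho_tilde_alpha:
  assumes "(k, j) \<in> alpha_idx K"
  shows "((\<lambda>t. rho_tilde K D P Q \<rho> \<theta> \<gamma> (\<alpha>(k := (\<alpha> k)(j := t)))) has_vector_derivative
           schur_mult (\<lambda>p q. d_alpha k j p q * exp (tilde_exponent \<theta> \<gamma> \<alpha> p q)) \<rho>) (at (\<alpha> k j))"
  unfolding rho_tilde_eq_schur_mult
proof (rule has_vector_derivative_schur_mult)
  fix p q
  have "tilde_exponent \<theta> \<gamma> (\<alpha>(k := (\<alpha> k)(j := t))) p q
      = tilde_exponent \<theta> \<gamma> (\<alpha>(k := (\<alpha> k)(j := 0))) p q + of_real t * d_alpha k j p q" for t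
    using assms min_max_mem_alpha_idx[of "fst p" "fst q" K]
    by (auto simp: tilde_exponent_def sym_ext_def d_alpha_def)
  from has_vector_derivative_exp_affine[OF this, where x = "\<alpha> k j"]
  show "((\<lambda>t. exp (tilde_exponent \<theta> \<gamma> (\<alpha>(k := (\<alpha> k)(j := t))) p q)) has_vector_derivative
          d_alpha k j p q * exp (tilde_exponent \<theta> \<gamma> \<alpha> p q)) (at (\<alpha> k j))"
    by simp
qed

lemma anticommutator_schur_mult:
  "(\<Sum>k=1..K. lam k *\<^sub>R P k) ** schur_mult s \<rho> + schur_mult s \<rho> ** (\<Sum>k=1..K. lam k *\<^sub>R P k)
     = 2 *\<^sub>R (\<Sum>k=1..K. lam k *\<^sub>R schur_mult (\<lambda>p q. d_theta k p q * s p q) \<rho>)"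
  unfolding sum_scaleR_P_eq_diag sum_scaleR_schur_mult sum_d_theta
  by (simp add: diag_mult_schur_mult schur_mult_mult_diag schur_mult_add scaleR_schur_mult;
      rule schur_mult_cong; simp add: field_simps)

lemma commutator_schur_mult:
  "csmult \<i> (comm (\<Sum>j=1..D. \<beta> j *\<^sub>R Q j) (schur_mult s \<rho>))
     = 2 *\<^sub>R (\<Sum>j=1..D. \<beta> j *\<^sub>R schur_mult (\<lambda>p q. d_gamma j p q * s p q) \<rho>)"
  unfolding comm_def sum_scaleR_Q_eq_diag sum_scaleR_schur_mult sum_d_gamma
  by (simp add: diag_mult_schur_mult schur_mult_mult_diag schur_mult_diff csmult_schur_mult
      scaleR_schur_mult; rule schur_mult_cong; simp add: field_simps)

lemma Fmap_schur_mult: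
  assumes L: "L = (\<Sum>k=1..K. lam k *\<^sub>R P k)" and adj_L: "adj L = L"
  shows "Fmap \<eta> L (schur_mult s \<rho>)
     = (1 - \<eta>) *\<^sub>R (\<Sum>(k, j)\<in>alpha_idx K. (lam k * lam j) *\<^sub>R schur_mult (\<lambda>p q. d_alpha k j p q * s p q) \<rho>)
       - (1 + \<eta>) *\<^sub>R (\<Sum>k=1..K. (lam k)\<^sup>2 *\<^sub>R schur_mult (\<lambda>p q. d_theta k p q * s p q) \<rho>)"
proof -
  have alpha_part: "(\<Sum>(k, j)\<in>alpha_idx K. (lam k * lam j) *\<^sub>R schur_mult (\<lambda>p q. d_alpha k j p q * s p q) \<rho>)
      = schur_mult (\<lambda>p q. of_real (zero_ext K lam (fst p) * zero_ext K lam (fst q)) * s p q) \<rho>"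
  proof -
    have "(\<Sum>(k, j)\<in>alpha_idx K. (lam k * lam j) *\<^sub>R schur_mult (\<lambda>p q. d_alpha k j p q * s p q) \<rho>)
        = schur_mult (\<lambda>p q. (\<Sum>(k, j)\<in>alpha_idx K. of_real (lam k * lam j) * d_alpha k j p q) * s p q) \<rho>"
      using sum_scaleR_schur_mult[of "\<lambda>(k, j). lam k * lam j" "\<lambda>(k, j). d_alpha k j" s \<rho> "alpha_idx K"]
      by (simp only: split_def)
    then show ?thesis
      by (simp only: sum_d_alpha)
  qed
  have theta_part: "(\<Sum>k=1..K. (lam k)\<^sup>2 *\<^sub>R schur_mult (\<lambda>p q. d_theta k p q * s p q) \<rho>)
      = schur_mult (\<lambda>p q. of_real ((zero_ext K lam (fst p))\<^sup>2 + (zero_ext K lam (fst q))\<^sup>2) / 2 * s p q) \<rho>"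
    unfolding sum_scaleR_schur_mult sum_d_theta by (auto simp: zero_ext_def intro!: schur_mult_cong)
  show ?thesis
    unfolding Fmap_def adj_L alpha_part theta_part unfolding L sum_scaleR_P_eq_diag
    by (simp add: scaleR_diag diag_add diag_mult_diag diag_mult_schur_mult schur_mult_mult_diag
        scaleR_schur_mult schur_mult_add schur_mult_diff;
        rule schur_mult_cong; simp add: field_simps power2_eq_square)
qed

end

theorem lemma1:
  fixes H L \<rho>0 :: "complex^'n^'n"
    and \<eta> :: real and K D :: nat
    and lam \<beta> :: "nat \<Rightarrow> real"
    and P Q :: "nat \<Rightarrow> complex^'n^'n"
    and \<theta> \<gamma> :: "nat \<Rightarrow> real" and \<alpha> :: "nat \<Rightarrow> nat \<Rightarrow> real"
  assumes herm_H: "hermitian H" and herm_L: "hermitian L"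
    and comm_HL: "comm H L = 0"
    and eta: "0 < \<eta>" "\<eta> \<le> 1"
    and L_dec: "L = (\<Sum>k=1..K. lam k *\<^sub>R P k)"
    and H_dec: "H = (\<Sum>j=1..D. \<beta> j *\<^sub>R Q j)"
    and P_proj: "orth_proj_family K P"
    and Q_proj: "orth_proj_family D Q"
    and PQ_comm: "\<forall>k\<in>{1..K}. \<forall>j\<in>{1..D}. comm (P k) (Q j) = 0"
    and rho0: "density_matrix \<rho>0"
  shows "\<exists>(D\<theta> :: nat \<Rightarrow> complex^'n^'n) (D\<gamma> :: nat \<Rightarrow> complex^'n^'n)
            (D\<alpha> :: nat \<Rightarrow> nat \<Rightarrow> complex^'n^'n).
    (\<forall>k\<in>{1..K}. ((\<lambda>t. rho_tilde K D P Q \<rho>0 (\<theta>(k := t)) \<gamma> \<alpha>)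
        has_vector_derivative D\<theta> k) (at (\<theta> k))) \<and>
    (\<forall>j\<in>{1..D}. ((\<lambda>t. rho_tilde K D P Q \<rho>0 \<theta> (\<gamma>(j := t)) \<alpha>)
        has_vector_derivative D\<gamma> j) (at (\<gamma> j))) \<and>
    (\<forall>(k, j)\<in>alpha_idx K. ((\<lambda>t. rho_tilde K D P Q \<rho>0 \<theta> \<gamma> (\<alpha>(k := (\<alpha> k)(j := t))))
        has_vector_derivative D\<alpha> k j) (at (\<alpha> k j))) \<and>
    (let \<rho> = rho_tilde K D P Q \<rho>0 \<theta> \<gamma> \<alpha>;
         S = span (D\<theta> ` {1..K} \<union> D\<gamma> ` {1..D} \<union> (\<lambda>(k, j). D\<alpha> k j) ` alpha_idx K)
     in csmult \<i> (comm H \<rho>) \<in> S \<and> Fmap \<eta> L \<rho> \<in> S \<and> L ** \<rho> + \<rho> ** L \<in> S \<and>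
        csmult \<i> (comm H \<rho>) = 2 *\<^sub>R (\<Sum>j=1..D. \<beta> j *\<^sub>R D\<gamma> j) \<and>
        L ** \<rho> + \<rho> ** L = 2 *\<^sub>R (\<Sum>k=1..K. lam k *\<^sub>R D\<theta> k) \<and>
        Fmap \<eta> L \<rho> = (1 - \<eta>) *\<^sub>R (\<Sum>(k, j)\<in>alpha_idx K. (lam k * lam j) *\<^sub>R D\<alpha> k j)
                       - (1 + \<eta>) *\<^sub>R (\<Sum>k=1..K. (lam k)\<^sup>2 *\<^sub>R D\<theta> k))"
proof -
  interpret commuting_projection_families K D P Q
    using P_proj Q_proj PQ_comm by unfold_locales (auto simp: comm_def)
  define E where "E p q = exp (tilde_exponent \<theta> \<gamma> \<alpha> p q)" for p q
  define D\<theta> where "D\<theta> k = schur_mult (\<lambda>p q. d_theta k p q * E p q) \<rho>0" for k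
  define D\<gamma> where "D\<gamma> j = schur_mult (\<lambda>p q. d_gamma j p q * E p q) \<rho>0" for j
  define D\<alpha> where "D\<alpha> k j = schur_mult (\<lambda>p q. d_alpha k j p q * E p q) \<rho>0" for k j
  have \<rho>: "rho_tilde K D P Q \<rho>0 \<theta> \<gamma> \<alpha> = schur_mult E \<rho>0"
    unfolding E_def by (rule rho_tilde_eq_schur_mult)
  have "adj L = L"
    using herm_L by (simp add: hermitian_def)
  then have identities:
    "csmult \<i> (comm H (schur_mult E \<rho>0)) = 2 *\<^sub>R (\<Sum>j=1..D. \<beta> j *\<^sub>R D\<gamma> j)"
    "L ** schur_mult E \<rho>0 + schur_mult E \<rho>0 ** L = 2 *\<^sub>R (\<Sum>k=1..K. lam k *\<^sub>R D\<theta> k)"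
    "Fmap \<eta> L (schur_mult E \<rho>0) = (1 - \<eta>) *\<^sub>R (\<Sum>(k, j)\<in>alpha_idx K. (lam k * lam j) *\<^sub>R D\<alpha> k j)
       - (1 + \<eta>) *\<^sub>R (\<Sum>k=1..K. (lam k)\<^sup>2 *\<^sub>R D\<theta> k)"
    unfolding D\<theta>_def D\<gamma>_def D\<alpha>_def H_dec L_dec
    by (simp_all only: commutator_schur_mult anticommutator_schur_mult Fmap_schur_mult)
  have "(\<forall>k\<in>{1..K}. ((\<lambda>t. rho_tilde K D P Q \<rho>0 (\<theta>(k := t)) \<gamma> \<alpha>) has_vector_derivative D\<theta> k) (at (\<theta> k)))
    \<and> (\<forall>j\<in>{1..D}. ((\<lambda>t. rho_tilde K D P Q \<rho>0 \<theta> (\<gamma>(j := t)) \<alpha>) has_vector_derivative D\<gamma> j) (at (\<gamma> j)))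
    \<and> (\<forall>(k, j)\<in>alpha_idx K. ((\<lambda>t. rho_tilde K D P Q \<rho>0 \<theta> \<gamma> (\<alpha>(k := (\<alpha> k)(j := t))))
          has_vector_derivative D\<alpha> k j) (at (\<alpha> k j)))"
    unfolding D\<theta>_def D\<gamma>_def D\<alpha>_def E_def
    by (blast intro: has_vector_derivative_rho_tilde_theta has_vector_derivative_rho_tilde_gamma
        has_vector_derivative_rho_tilde_alpha)
  moreover
  let ?S = "span (D\<theta> ` {1..K} \<union> D\<gamma> ` {1..D} \<union> (\<lambda>(k, j). D\<alpha> k j) ` alpha_idx K)"
  have "2 *\<^sub>R (\<Sum>j=1..D. \<beta> j *\<^sub>R D\<gamma> j) \<in> ?S"
    "2 *\<^sub>R (\<Sum>k=1..K. lam k *\<^sub>R D\<theta> k) \<in> ?S"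
    "(1 - \<eta>) *\<^sub>R (\<Sum>(k, j)\<in>alpha_idx K. (lam k * lam j) *\<^sub>R D\<alpha> k j)
       - (1 + \<eta>) *\<^sub>R (\<Sum>k=1..K. (lam k)\<^sup>2 *\<^sub>R D\<theta> k) \<in> ?S"
    by (auto intro!: span_scale span_sum span_diff) (force intro: span_base)+
  ultimately show ?thesis
    unfolding Let_def \<rho> identities by blast
qed

end
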